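(* Let $\phi$ and $\Phi$ denote the standard normal density and distribution function. Let $\mathbf{x}$ be a $p$-dimensional covariate vector whose support $\mathcal{X}\subseteq\mathbb{R}^p$ contains a nonempty open set of $\mathbb{R}^p$. Let $b_0,\tilde b_0\in\mathbb{R}$, $\boldsymbol\beta,\tilde{\boldsymbol\beta}\in\mathbb{R}^p$, $\lambda,\tilde\lambda\in\mathbb{R}$, and let $Q,\tilde Q$ be probability distribution functions on $(0,\infty)$. Suppose that for all $\mathbf{x}\in\mathcal{X}$ and almost all $t>0$, $$\int_0^\infty \frac{2}{\sigma}\,\phi\!\left(\frac{\log t-b_0-\mathbf{x}^\top\boldsymbol\beta}{\sigma}\right)\Phi\!\left(\lambda\,\frac{\log t-b_0-\mathbf{x}^\top\boldsymbol\beta}{\sigma}\right)dQ(\sigma)=\int_0^\infty \frac{2}{\sigma}\,\phi\!\left(\frac{\log t-\tilde b_0-\mathbf{x}^\top\tilde{\boldsymbol\beta}}{\sigma}\right)\Phi\!\left(\tilde\lambda\,\frac{\log t-\tilde b_0-\mathbf{x}^\top\tilde{\boldsymbol\beta}}{\sigma}\right)d\tilde Q(\sigma).$$ Then $(b_0,\boldsymbol\beta^\top,\lambda,Q)=(\tilde b_0,\tilde{\boldsymbol\beta}^\top,\tilde\lambda,\tilde Q)$.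
   Context: This is the identifiability of the accelerated failure time model $\log T=b_0+\mathbf{x}^\top\boldsymbol\beta+\epsilon$ in which, given $\mathbf{x}$, $\epsilon$ has the skew-normal scale mixture density $f(\epsilon)=\int_0^\infty \frac{2}{\sigma}\phi(\epsilon/\sigma)\Phi(\lambda\epsilon/\sigma)\,dQ(\sigma)$, with slant parameter $\lambda$ and an unspecified mixing (latent) distribution $Q$ of the scale $\sigma$ on $(0,\infty)$. *)

theory Defs
  imports "HOL-Probability.Probability"
begin

definition Phi :: "real \<Rightarrow> real" where
  "Phi x = (LBINT y:{..x}. std_normal_density y)"

definition sn_mix_density :: "real measure \<Rightarrow> real \<Rightarrow> real \<Rightarrow> ennreal" where
  "sn_mix_density Q lam e =
     (\<integral>\<^sup>+ \<sigma>. ennreal (2 / \<sigma> * std_normal_density (e / \<sigma>) * Phi (lam * (e / \<sigma>))) \<partial>Q)"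

definition scale_mixing_dist :: "real measure \<Rightarrow> bool" where
  "scale_mixing_dist Q \<longleftrightarrow> prob_space Q \<and> sets Q = sets borel \<and> emeasure Q {0<..} = 1"

end

(*
  Testing a skew-normal scale mixture density against the even functions 1 + s cos(t e) removes
  the skewing factor, because Phi(lam x) + Phi(-lam x) = 1, and leaves 1 + s E_Q exp(-(t sigma)^2/2).
  After the substitution u = ln t the hypothesis says that, for each x, the mixtures located at
  b0 + x.beta and b0' + x.beta' agree almost everywhere. If these locations differed by d, testing
  with t = pi/d would turn cos into -cos and give 1 + c = 1 - c' with c, c' > 0; so they agree, and
  two affine functions that agree on an open set coincide. Once the locations are equal, the mass
  of (0, infinity), which is strictly increasing in lam, identifies lam, and the numbers
  E_Q exp(-k sigma^2) are the moments of the image of Q under sigma |-> exp(-sigma^2). That image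
  lives on [0,1], so its moments determine its characteristic function and hence the image itself;
  the map is injective on (0, infinity), which identifies Q.
*)

theory Submission
  imports Defs
begin

lemma integrable_std_normal_density: "integrable lborel std_normal_density"
  using integrable_normal_moment[of 1 0 0] by simp

lemma integrable_indicator_std_normal_density:
  "A \<in> sets borel \<Longrightarrow> integrable lborel (\<lambda>y. indicator A y * std_normal_density y)"
  by (rule Bochner_Integration.integrable_bound[OF integrable_std_normal_density])
     (auto simp: indicator_def)

lemma Phi_eq_integral: "Phi x = (\<integral>y. indicator {..x} y * std_normal_density y \<partial>lborel)"
  by (simp add: Phi_def set_lebesgue_integral_def)

lemma Phi_nonneg: "0 \<le> Phi x"
  unfolding Phi_eq_integral by (intro integral_nonneg_AE) auto

lemma Phi_mono: "x \<le> y \<Longrightarrow> Phi x \<le> Phi y"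
  unfolding Phi_eq_integral
  by (intro integral_mono integrable_indicator_std_normal_density) (auto simp: indicator_def)

lemma borel_measurable_Phi [measurable]: "Phi \<in> borel_measurable borel"
  by (rule borel_measurable_mono) (simp add: mono_def Phi_mono)

lemma Phi_minus: "Phi (- x) = 1 - Phi x"
proof -
  have "Phi (- x) = (\<integral>y. indicator {..-x} (- y) * std_normal_density (- y) \<partial>lborel)"
    unfolding Phi_eq_integral
    using lborel_integral_real_affine[of "-1" "\<lambda>y. indicator {..-x} y * std_normal_density y" 0]
    by simp
  also have "\<dots> = (\<integral>y. indicator {x..} y * std_normal_density y \<partial>lborel)"
    by (intro Bochner_Integration.integral_cong) (auto simp: indicator_def std_normal_density_def)
  finally have "Phi x + Phi (- x)
      = (\<integral>y. indicator {..x} y * std_normal_density y + indicator {x..} y * std_normal_density y \<partial>lborel)"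
    unfolding Phi_eq_integral
    by (simp add: integrable_indicator_std_normal_density)
  also have "\<dots> = (\<integral>y. std_normal_density y \<partial>lborel)"
    using AE_lborel_singleton[of x] by (intro integral_cong_AE) (auto simp: indicator_def)
  finally show ?thesis by simp
qed

lemma Phi_strict_mono: "strict_mono Phi"
proof (rule strict_monoI)
  fix x y :: real assume "x < y"
  define I where "I = (\<integral>z. indicator {x<..y} z * std_normal_density z \<partial>lborel)"
  have "Phi y = (\<integral>z. indicator {..x} z * std_normal_density z + indicator {x<..y} z * std_normal_density z \<partial>lborel)"
    unfolding Phi_eq_integral
    by (intro Bochner_Integration.integral_cong) (use \<open>x < y\<close> in \<open>auto simp: indicator_def\<close>)
  then have "Phi y = Phi x + I"
    unfolding Phi_eq_integral I_def
    by (simp add: integrable_indicator_std_normal_density)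
  moreover have "I \<noteq> 0"
  proof
    assume "I = 0"
    then have "AE z in lborel. indicator {x<..y} z * std_normal_density z = 0"
      unfolding I_def
      by (subst (asm) integral_nonneg_eq_0_iff_AE) (auto intro!: integrable_indicator_std_normal_density)
    moreover have "std_normal_density z \<noteq> 0" for z
      using normal_density_pos[of 1 0 z] by simp
    ultimately have "AE z in lborel. z \<notin> {x<..y}"
      by (auto elim!: eventually_mono simp: indicator_def split: if_splits)
    then have "emeasure lborel {x<..y} = 0"
      by (subst (asm) AE_iff_measurable[of "{x<..y}"]) auto
    with \<open>x < y\<close> show False by simp
  qed
  moreover have "0 \<le> I"
    unfolding I_def by (intro integral_nonneg_AE) auto
  ultimately show "Phi x < Phi y" by linarith
qed

definition skew_normal_density :: "real \<Rightarrow> real \<Rightarrow> real" where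
  "skew_normal_density lam x = 2 * std_normal_density x * Phi (lam * x)"

lemma skew_normal_density_nonneg: "0 \<le> skew_normal_density lam x"
  by (simp add: skew_normal_density_def Phi_nonneg)

lemma borel_measurable_skew_normal_density [measurable]:
  "skew_normal_density lam \<in> borel_measurable borel"
  unfolding skew_normal_density_def by measurable

lemma nn_integral_skew_normal_density_even:
  assumes [measurable]: "g \<in> borel_measurable borel" and even: "\<And>x. g (- x) = g x"
  shows "(\<integral>\<^sup>+x. ennreal (g x * skew_normal_density lam x) \<partial>lborel)
       = (\<integral>\<^sup>+x. ennreal (g x * std_normal_density x) \<partial>lborel)"
proof -
  define G where "G l = (\<integral>\<^sup>+x. ennreal (g x * skew_normal_density l x) \<partial>lborel)" for l
  have "G lam = G (- lam)"
    unfolding G_def using even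
    by (subst nn_integral_real_affine[where c="-1" and t=0])
       (auto simp: skew_normal_density_def std_normal_density_def)
  moreover have "G lam + G (- lam) = (\<integral>\<^sup>+x. 2 * ennreal (g x * std_normal_density x) \<partial>lborel)"
    unfolding G_def
  proof (subst nn_integral_add[symmetric], simp_all, intro nn_integral_cong)
    fix x
    have "skew_normal_density lam x + skew_normal_density (- lam) x = 2 * std_normal_density x"
      by (simp add: skew_normal_density_def Phi_minus algebra_simps)
    then show "ennreal (g x * skew_normal_density lam x) + ennreal (g x * skew_normal_density (- lam) x)
             = 2 * ennreal (g x * std_normal_density x)"
      by (simp add: ennreal_mult'' skew_normal_density_nonneg flip: distrib_left ennreal_plus)
         (simp add: ennreal_mult'' mult_ac)
  qed
  ultimately have "2 * G lam = 2 * (\<integral>\<^sup>+x. ennreal (g x * std_normal_density x) \<partial>lborel)"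
    by (simp add: nn_integral_cmult flip: mult_2)
  then show ?thesis
    unfolding G_def by (simp add: ennreal_mult_cancel_left)
qed

lemma integral_std_normal_density_cos:
  "(\<integral>x. std_normal_density x * cos (c * x) \<partial>lborel) = exp (- c\<^sup>2 / 2)"
proof -
  have "integrable lborel (\<lambda>x. std_normal_density x *\<^sub>R iexp (c * x))"
    by (rule Bochner_Integration.integrable_bound[OF integrable_std_normal_density]) (auto simp: norm_mult)
  then have "(\<integral>x. std_normal_density x * cos (c * x) \<partial>lborel)
      = Re (CLINT x|lborel. std_normal_density x *\<^sub>R iexp (c * x))"
    by (subst integral_bounded_linear[symmetric, OF bounded_linear_Re]) (simp_all add: Re_exp)
  also have "(CLINT x|lborel. std_normal_density x *\<^sub>R iexp (c * x)) = char std_normal_distribution c"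
    unfolding char_def by (subst integral_density) auto
  finally show ?thesis
    by (simp add: char_std_normal_distribution)
qed

lemma nn_integral_cos_skew_normal_density:
  assumes "\<bar>s\<bar> \<le> 1"
  shows "(\<integral>\<^sup>+x. ennreal ((1 + s * cos (c * x)) * skew_normal_density lam x) \<partial>lborel)
       = ennreal (1 + s * exp (- c\<^sup>2 / 2))"
proof -
  have cos_integrable: "integrable lborel (\<lambda>x. std_normal_density x * cos (c * x))"
    by (rule Bochner_Integration.integrable_bound[OF integrable_std_normal_density])
       (auto simp: abs_mult intro!: mult_left_le)
  have "\<bar>s * cos (c * x)\<bar> \<le> 1" for x
    using assms by (simp add: abs_mult mult_le_one)
  then have nonneg: "0 \<le> 1 + s * cos (c * x)" for x
    by (smt (verit))
  then have "(\<integral>\<^sup>+x. ennreal ((1 + s * cos (c * x)) * std_normal_density x) \<partial>lborel)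
      = ennreal (\<integral>x. (1 + s * cos (c * x)) * std_normal_density x \<partial>lborel)"
    using cos_integrable integrable_std_normal_density
    by (intro nn_integral_eq_integral AE_I2 mult_nonneg_nonneg nonneg) (auto simp: algebra_simps)
  also have "(\<integral>x. (1 + s * cos (c * x)) * std_normal_density x \<partial>lborel)
      = (\<integral>x. std_normal_density x \<partial>lborel) + s * (\<integral>x. std_normal_density x * cos (c * x) \<partial>lborel)"
    using cos_integrable integrable_std_normal_density by (simp add: algebra_simps)
  also have "\<dots> = 1 + s * exp (- c\<^sup>2 / 2)"
    by (simp add: integral_std_normal_density_cos)
  finally show ?thesis
    by (subst nn_integral_skew_normal_density_even) auto
qed

lemma strict_mono_skew_normal_prob_pos:
  "strict_mono (\<lambda>lam. \<integral>\<^sup>+x\<in>{0<..}. ennreal (skew_normal_density lam x) \<partial>lborel)"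
proof (rule strict_monoI)
  fix lam lam' :: real assume "lam < lam'"
  have less: "skew_normal_density lam x < skew_normal_density lam' x" if "0 < x" for x
    using \<open>lam < lam'\<close> that strict_monoD[OF Phi_strict_mono, of "lam * x" "lam' * x"]
    by (simp add: skew_normal_density_def normal_density_pos)
  have "(\<integral>\<^sup>+x\<in>{0<..}. ennreal (skew_normal_density lam x) \<partial>lborel)
      \<le> (\<integral>\<^sup>+x. ennreal (skew_normal_density lam x) \<partial>lborel)"
    by (intro nn_integral_mono) (simp add: indicator_def)
  also have "\<dots> = 1"
    using nn_integral_skew_normal_density_even[of "\<lambda>_. 1" lam] integrable_std_normal_density
    by (simp add: nn_integral_eq_integral)
  finally have finite: "(\<integral>\<^sup>+x\<in>{0<..}. ennreal (skew_normal_density lam x) \<partial>lborel) \<noteq> \<infinity>"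
    by (auto simp: top_unique)
  have "\<not> (AE x in lborel. ennreal (skew_normal_density lam' x) * indicator {0<..} x
                         \<le> ennreal (skew_normal_density lam x) * indicator {0<..} x)"
  proof
    assume "AE x in lborel. ennreal (skew_normal_density lam' x) * indicator {0<..} x
                         \<le> ennreal (skew_normal_density lam x) * indicator {0<..} x"
    then have "AE x in lborel. x \<notin> {0<..(1::real)}"
      by eventually_elim
         (fastforce simp: skew_normal_density_nonneg indicator_def split: if_splits dest: less)
    then have "emeasure lborel {0<..(1::real)} = 0"
      by (subst (asm) AE_iff_measurable[of "{0<..1}"]) auto
    then show False by simp
  qed
  then show "(\<integral>\<^sup>+x\<in>{0<..}. ennreal (skew_normal_density lam x) \<partial>lborel)
           < (\<integral>\<^sup>+x\<in>{0<..}. ennreal (skew_normal_density lam' x) \<partial>lborel)"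
    using finite less
    by (intro nn_integral_less)
       (auto simp: skew_normal_density_nonneg indicator_def intro!: less_imp_le)
qed

lemma sn_mix_density_eq:
  "sn_mix_density Q lam e = (\<integral>\<^sup>+\<sigma>. ennreal (skew_normal_density lam (e / \<sigma>) / \<sigma>) \<partial>Q)"
  unfolding sn_mix_density_def skew_normal_density_def by (simp add: field_simps)

lemma scale_mixing_dist_prob_space: "scale_mixing_dist Q \<Longrightarrow> prob_space Q"
  by (simp add: scale_mixing_dist_def)

lemma measurable_scale_mixing_dist: "scale_mixing_dist Q \<Longrightarrow> measurable Q M = measurable borel M"
  by (simp add: scale_mixing_dist_def cong: measurable_cong_sets)

lemma scale_mixing_dist_AE_pos: "scale_mixing_dist Q \<Longrightarrow> AE \<sigma> in Q. 0 < \<sigma>"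
  using prob_space.AE_prob_1[of Q "{0<..}"]
  by (simp add: scale_mixing_dist_def measure_def)

lemma borel_measurable_sn_mix_density [measurable]:
  assumes "scale_mixing_dist Q"
  shows "sn_mix_density Q lam \<in> borel_measurable borel"
proof -
  interpret prob_space Q
    using assms by (rule scale_mixing_dist_prob_space)
  have "(\<lambda>(e, \<sigma>). ennreal (skew_normal_density lam (e / \<sigma>) / \<sigma>)) \<in> borel_measurable (borel \<Otimes>\<^sub>M Q)"
    using assms by (simp add: scale_mixing_dist_def cong: measurable_cong_sets[OF sets_pair_measure_cong])
  then show ?thesis
    unfolding sn_mix_density_eq[abs_def] by (rule borel_measurable_nn_integral)
qed

lemma nn_integral_scaled_skew_normal_density:
  assumes "0 < \<sigma>" and [measurable]: "g \<in> borel_measurable borel"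
  shows "(\<integral>\<^sup>+e. ennreal (g e) * ennreal (skew_normal_density lam (e / \<sigma>) / \<sigma>) \<partial>lborel)
       = (\<integral>\<^sup>+x. ennreal (g (\<sigma> * x) * skew_normal_density lam x) \<partial>lborel)"
proof -
  have "(\<integral>\<^sup>+e. ennreal (g e) * ennreal (skew_normal_density lam (e / \<sigma>) / \<sigma>) \<partial>lborel)
      = (\<integral>\<^sup>+x. ennreal \<sigma> * (ennreal (g (\<sigma> * x)) * ennreal (skew_normal_density lam x / \<sigma>)) \<partial>lborel)"
    using \<open>0 < \<sigma>\<close>
    by (subst nn_integral_real_affine[where c=\<sigma> and t=0]) (auto simp: nn_integral_cmult)
  also have "\<dots> = (\<integral>\<^sup>+x. ennreal (g (\<sigma> * x) * skew_normal_density lam x) \<partial>lborel)"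
  proof (intro nn_integral_cong)
    fix x
    have "ennreal \<sigma> * ennreal (skew_normal_density lam x / \<sigma>) = ennreal (skew_normal_density lam x)"
      using \<open>0 < \<sigma>\<close> by (simp add: skew_normal_density_nonneg flip: ennreal_mult)
    then show "ennreal \<sigma> * (ennreal (g (\<sigma> * x)) * ennreal (skew_normal_density lam x / \<sigma>))
             = ennreal (g (\<sigma> * x) * skew_normal_density lam x)"
      by (metis ennreal_mult'' skew_normal_density_nonneg mult.left_commute)
  qed
  finally show ?thesis .
qed

lemma nn_integral_sn_mix_density:
  assumes Q: "scale_mixing_dist Q" and [measurable]: "g \<in> borel_measurable borel"
  shows "(\<integral>\<^sup>+e. ennreal (g e) * sn_mix_density Q lam e \<partial>lborel)
       = (\<integral>\<^sup>+\<sigma>. (\<integral>\<^sup>+x. ennreal (g (\<sigma> * x) * skew_normal_density lam x) \<partial>lborel) \<partial>Q)"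
proof -
  interpret pair_sigma_finite Q lborel
    using Q by (intro pair_sigma_finite.intro prob_space_imp_sigma_finite
                  scale_mixing_dist_prob_space sigma_finite_lborel)
  have "(\<integral>\<^sup>+e. ennreal (g e) * sn_mix_density Q lam e \<partial>lborel)
      = (\<integral>\<^sup>+e. (\<integral>\<^sup>+\<sigma>. ennreal (g e) * ennreal (skew_normal_density lam (e / \<sigma>) / \<sigma>) \<partial>Q) \<partial>lborel)"
    unfolding sn_mix_density_eq using Q
    by (intro nn_integral_cong nn_integral_cmult[symmetric]) (simp add: measurable_scale_mixing_dist)
  also have "\<dots> = (\<integral>\<^sup>+\<sigma>. (\<integral>\<^sup>+e. ennreal (g e) * ennreal (skew_normal_density lam (e / \<sigma>) / \<sigma>) \<partial>lborel) \<partial>Q)"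
    using Q by (intro Fubini')
      (simp add: scale_mixing_dist_def cong: measurable_cong_sets[OF sets_pair_measure_cong])
  also have "\<dots> = (\<integral>\<^sup>+\<sigma>. (\<integral>\<^sup>+x. ennreal (g (\<sigma> * x) * skew_normal_density lam x) \<partial>lborel) \<partial>Q)"
    using scale_mixing_dist_AE_pos[OF Q]
    by (intro nn_integral_cong_AE) (auto elim!: eventually_mono simp: nn_integral_scaled_skew_normal_density)
  finally show ?thesis .
qed

definition normal_scale_mix_char :: "real measure \<Rightarrow> real \<Rightarrow> real" where
  "normal_scale_mix_char Q t = (\<integral>\<sigma>. exp (- (t * \<sigma>)\<^sup>2 / 2) \<partial>Q)"

lemma integrable_scale_mixing_dist_bounded:
  fixes f :: "real \<Rightarrow> real"
  assumes "scale_mixing_dist Q" "f \<in> borel_measurable borel" "\<And>\<sigma>. \<bar>f \<sigma>\<bar> \<le> B"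
  shows "integrable Q f"
proof -
  interpret prob_space Q
    using assms(1) by (rule scale_mixing_dist_prob_space)
  show ?thesis
    using assms by (intro integrable_const_bound[where B=B]) (auto simp: measurable_scale_mixing_dist)
qed

lemma normal_scale_mix_char_bounds:
  assumes "scale_mixing_dist Q"
  shows "0 < normal_scale_mix_char Q t" "normal_scale_mix_char Q t \<le> 1"
proof -
  interpret prob_space Q
    using assms by (rule scale_mixing_dist_prob_space)
  have "integrable Q (\<lambda>\<sigma>. exp (- (t * \<sigma>)\<^sup>2 / 2))"
    using assms by (intro integrable_scale_mixing_dist_bounded[where B=1]) auto
  then show "0 < normal_scale_mix_char Q t" "normal_scale_mix_char Q t \<le> 1"
    unfolding normal_scale_mix_char_def by (auto intro!: expectation_greater integral_le_const)
qed

lemma nn_integral_cos_sn_mix_density: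
  assumes Q: "scale_mixing_dist Q" and "\<bar>s\<bar> \<le> 1"
  shows "(\<integral>\<^sup>+e. ennreal (1 + s * cos (t * e)) * sn_mix_density Q lam e \<partial>lborel)
       = ennreal (1 + s * normal_scale_mix_char Q t)"
proof -
  interpret prob_space Q
    using Q by (rule scale_mixing_dist_prob_space)
  have "(\<integral>\<^sup>+e. ennreal (1 + s * cos (t * e)) * sn_mix_density Q lam e \<partial>lborel)
      = (\<integral>\<^sup>+\<sigma>. ennreal (1 + s * exp (- (t * \<sigma>)\<^sup>2 / 2)) \<partial>Q)"
    using \<open>\<bar>s\<bar> \<le> 1\<close>
    by (simp add: nn_integral_sn_mix_density[OF Q] nn_integral_cos_skew_normal_density
                  power_mult_distrib flip: mult.assoc)
  also have "\<dots> = ennreal (\<integral>\<sigma>. 1 + s * exp (- (t * \<sigma>)\<^sup>2 / 2) \<partial>Q)"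
  proof (rule nn_integral_eq_integral)
    have "\<bar>s * exp (- (t * \<sigma>)\<^sup>2 / 2)\<bar> \<le> 1" for \<sigma>
      using \<open>\<bar>s\<bar> \<le> 1\<close> by (simp add: abs_mult mult_le_one)
    then have bound: "- 1 \<le> s * exp (- (t * \<sigma>)\<^sup>2 / 2) \<and> s * exp (- (t * \<sigma>)\<^sup>2 / 2) \<le> 1" for \<sigma>
      by (auto simp: abs_le_iff)
    show "integrable Q (\<lambda>\<sigma>. 1 + s * exp (- (t * \<sigma>)\<^sup>2 / 2))"
    proof (rule integrable_scale_mixing_dist_bounded[OF Q, where B=2])
      show "\<bar>1 + s * exp (- (t * \<sigma>)\<^sup>2 / 2)\<bar> \<le> 2" for \<sigma>
        using bound[of \<sigma>] by (simp add: abs_le_iff)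
    qed simp
    show "AE \<sigma> in Q. 0 \<le> 1 + s * exp (- (t * \<sigma>)\<^sup>2 / 2)"
    proof (rule AE_I2)
      show "0 \<le> 1 + s * exp (- (t * \<sigma>)\<^sup>2 / 2)" for \<sigma>
        using bound[of \<sigma>] by linarith
    qed
  qed
  also have "(\<integral>\<sigma>. 1 + s * exp (- (t * \<sigma>)\<^sup>2 / 2) \<partial>Q) = 1 + s * normal_scale_mix_char Q t"
    using Q unfolding normal_scale_mix_char_def
    by (subst Bochner_Integration.integral_add)
       (auto intro!: integrable_scale_mixing_dist_bounded[where B=1] simp: prob_space)
  finally show ?thesis .
qed

lemma nn_integral_pos_sn_mix_density:
  assumes Q: "scale_mixing_dist Q"
  shows "(\<integral>\<^sup>+e\<in>{0<..}. sn_mix_density Q lam e \<partial>lborel)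
       = (\<integral>\<^sup>+x\<in>{0<..}. ennreal (skew_normal_density lam x) \<partial>lborel)"
proof -
  interpret prob_space Q
    using Q by (rule scale_mixing_dist_prob_space)
  have "(\<integral>\<^sup>+e\<in>{0<..}. sn_mix_density Q lam e \<partial>lborel)
      = (\<integral>\<^sup>+e. ennreal (indicator {0<..} e) * sn_mix_density Q lam e \<partial>lborel)"
    by (intro nn_integral_cong) (simp add: indicator_def)
  also have "\<dots> = (\<integral>\<^sup>+\<sigma>. (\<integral>\<^sup>+x. ennreal (indicator {0<..} (\<sigma> * x) * skew_normal_density lam x) \<partial>lborel) \<partial>Q)"
    by (rule nn_integral_sn_mix_density[OF Q]) simp
  also have "\<dots> = (\<integral>\<^sup>+\<sigma>. (\<integral>\<^sup>+x\<in>{0<..}. ennreal (skew_normal_density lam x) \<partial>lborel) \<partial>Q)"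
    using scale_mixing_dist_AE_pos[OF Q]
    by (intro nn_integral_cong_AE)
       (auto elim!: eventually_mono intro!: nn_integral_cong simp: indicator_def zero_less_mult_iff)
  finally show ?thesis
    by (simp add: emeasure_space_1)
qed

lemma (in real_distribution) char_moment_approx:
  assumes bounded: "AE x in M. \<bar>x\<bar> \<le> B"
  shows "cmod (char M t - (\<Sum>k\<le>n. (\<i> * t) ^ k / fact k * (\<integral>x. x ^ k \<partial>M)))
           \<le> 2 * (\<bar>t\<bar> * B) ^ n / fact n"
proof -
  have integrable_bounded: "integrable M f"
    if "f \<in> borel_measurable borel" "\<And>x. \<bar>x\<bar> \<le> B \<Longrightarrow> \<bar>f x\<bar> \<le> C" for f :: "real \<Rightarrow> real" and C
    using bounded that by (intro integrable_const_bound[where B=C]) (auto elim!: eventually_mono)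
  have abs_power_le: "\<bar>x\<bar> ^ k \<le> B ^ k" if "\<bar>x\<bar> \<le> B" for x :: real and k
    using that by (intro power_mono) auto
  have "cmod (char M t - (\<Sum>k\<le>n. (\<i> * t) ^ k / fact k * (\<integral>x. x ^ k \<partial>M)))
      \<le> 2 * \<bar>t\<bar> ^ n / fact n * (\<integral>x. \<bar>x\<bar> ^ n \<partial>M)"
    using abs_power_le by (intro char_approx1 integrable_bounded[of _ "B ^ _"]) (auto simp: power_abs)
  also have "\<dots> \<le> 2 * \<bar>t\<bar> ^ n / fact n * B ^ n"
    using bounded abs_power_le
    by (intro mult_left_mono integral_le_const integrable_bounded[of _ "B ^ n"]) (auto elim!: eventually_mono)
  also have "\<dots> = 2 * (\<bar>t\<bar> * B) ^ n / fact n"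
    by (simp add: power_mult_distrib)
  finally show ?thesis .
qed

lemma real_distribution_eq_of_moments:
  assumes M: "real_distribution M" and N: "real_distribution N"
    and bounded: "AE x in M. \<bar>x\<bar> \<le> B" "AE x in N. \<bar>x\<bar> \<le> B"
    and moments: "\<And>k. (\<integral>x. x ^ k \<partial>M) = (\<integral>x. x ^ k \<partial>N)"
  shows "M = N"
proof (rule Levy_uniqueness[OF M N], rule ext)
  fix t :: real
  define S where "S n = (\<Sum>k\<le>n. (\<i> * t) ^ k / fact k * (\<integral>x. x ^ k \<partial>M))" for n
  have "cmod (char M t - char N t) \<le> 4 * ((\<bar>t\<bar> * B) ^ n / fact n)" for n
  proof -
    have "cmod (char M t - S n) \<le> 2 * (\<bar>t\<bar> * B) ^ n / fact n"
      unfolding S_def by (rule real_distribution.char_moment_approx[OF M bounded(1)])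
    moreover have "cmod (S n - char N t) \<le> 2 * (\<bar>t\<bar> * B) ^ n / fact n"
      using real_distribution.char_moment_approx[OF N bounded(2)]
      by (subst norm_minus_commute) (simp add: S_def moments)
    ultimately have "cmod (char M t - char N t) \<le> 2 * (\<bar>t\<bar> * B) ^ n / fact n + 2 * (\<bar>t\<bar> * B) ^ n / fact n"
      by (rule norm_diff_triangle_le)
    then show ?thesis
      by simp
  qed
  moreover have "(\<lambda>n. 4 * ((\<bar>t\<bar> * B) ^ n / fact n)) \<longlonglongrightarrow> 0"
    using tendsto_mult_right_zero[OF summable_LIMSEQ_zero[OF summable_exp[of "\<bar>t\<bar> * B"]], of 4]
    by (simp add: inverse_eq_divide)
  ultimately have "cmod (char M t - char N t) \<le> 0"
    by (intro LIMSEQ_le_const[where X="\<lambda>n. 4 * ((\<bar>t\<bar> * B) ^ n / fact n)"]) auto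
  then show "char M t = char N t"
    by simp
qed

lemma scale_mixing_dist_eqI:
  assumes Q: "scale_mixing_dist Q" and Q': "scale_mixing_dist Q'"
    and char_eq: "\<And>t. normal_scale_mix_char Q t = normal_scale_mix_char Q' t"
  shows "Q = Q'"
proof -
  define u where "u = (\<lambda>\<sigma>::real. exp (- \<sigma>\<^sup>2))"
  have u_measurable: "u \<in> measurable M borel" if "scale_mixing_dist M" for M
    using that by (simp add: measurable_scale_mixing_dist u_def)
  have "real_distribution (distr M borel u)" if "scale_mixing_dist M" for M
    using that u_measurable[OF that]
    by (auto simp: real_distribution_def real_distribution_axioms_def
             intro!: prob_space.prob_space_distr[OF scale_mixing_dist_prob_space])
  moreover have "AE y in distr M borel u. \<bar>y\<bar> \<le> 1" if "scale_mixing_dist M" for M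
    using u_measurable[OF that] by (subst AE_distr_iff) (auto simp: u_def)
  moreover have "(\<integral>y. y ^ k \<partial>distr M borel u) = normal_scale_mix_char M (sqrt (2 * k))"
    if "scale_mixing_dist M" for M k
  proof -
    have "exp (- (sqrt (2 * k) * \<sigma>)\<^sup>2 / 2) = u \<sigma> ^ k" for \<sigma>
      by (simp add: u_def power_mult_distrib flip: exp_of_nat_mult)
    then show ?thesis
      using u_measurable[OF that] by (simp add: integral_distr normal_scale_mix_char_def)
  qed
  ultimately have "distr Q borel u = distr Q' borel u"
    using Q Q' char_eq by (intro real_distribution_eq_of_moments[where B=1]) auto
  moreover have "distr (distr M borel u) borel (\<lambda>y. sqrt (- ln y)) = M" if M: "scale_mixing_dist M" for M
  proof -
    have "distr (distr M borel u) borel (\<lambda>y. sqrt (- ln y)) = distr M borel (\<lambda>\<sigma>. sqrt (- ln (u \<sigma>)))"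
      using u_measurable[OF M] by (subst distr_distr) (auto simp: comp_def)
    also have "\<dots> = distr M borel (\<lambda>\<sigma>. \<sigma>)"
      using scale_mixing_dist_AE_pos[OF M] M
      by (intro distr_cong_AE) (auto simp: u_def measurable_scale_mixing_dist elim!: eventually_mono)
    also have "\<dots> = M"
      using M by (intro distr_id2) (simp add: scale_mixing_dist_def)
    finally show ?thesis .
  qed
  ultimately show ?thesis
    using Q Q' by metis
qed

lemma AE_lborel_ln:
  fixes P :: "real \<Rightarrow> bool"
  assumes ae: "AE t in lborel. 0 < t \<longrightarrow> P (ln t)" and [measurable]: "Measurable.pred borel P"
  shows "AE u in lborel. P u"
proof -
  from ae obtain N where sub: "{t \<in> space lborel. \<not> (0 < t \<longrightarrow> P (ln t))} \<subseteq> N"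
    and "emeasure lborel N = 0" "N \<in> sets lborel"
    by (rule AE_E)
  then have N: "N \<in> null_sets lborel"
    by (intro null_setsI)
  have "negligible (N \<inter> {0<..})"
    unfolding negligible_iff_null_sets
    by (rule null_sets_completion_subset[OF _ null_sets_completionI[OF N]]) auto
  moreover have "ln differentiable_on (N \<inter> {0<..})"
    by (intro differentiable_at_imp_differentiable_on) (auto simp: real_differentiable_def dest: DERIV_ln)
  ultimately have "negligible (ln ` (N \<inter> {0<..}))"
    by (intro negligible_differentiable_image_negligible) auto
  moreover have "{u. \<not> P u} \<subseteq> ln ` (N \<inter> {0<..})"
    using sub by (force intro: image_eqI[where x="exp _"])
  ultimately have "{u. \<not> P u} \<in> null_sets (completion lborel)"
    unfolding negligible_iff_null_sets[symmetric] by (rule negligible_subset)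
  then have "{u. \<not> P u} \<in> null_sets lborel"
    by (simp add: null_sets_completion_iff)
  then show ?thesis
    by (rule AE_I') auto
qed

lemma nn_integral_shift_AE_eq:
  fixes f g :: "real \<Rightarrow> ennreal"
  assumes [measurable]: "f \<in> borel_measurable borel" "g \<in> borel_measurable borel" "h \<in> borel_measurable borel"
    and eq: "AE u in lborel. f (u - a) = g (u - b)"
  shows "(\<integral>\<^sup>+e. ennreal (h e) * f e \<partial>lborel) = (\<integral>\<^sup>+v. ennreal (h (v + b - a)) * g v \<partial>lborel)"
proof -
  have "(\<integral>\<^sup>+e. ennreal (h e) * f e \<partial>lborel) = (\<integral>\<^sup>+u. ennreal (h (u - a)) * f (u - a) \<partial>lborel)"
    by (subst nn_integral_real_affine[where c=1 and t="-a"]) auto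
  also have "\<dots> = (\<integral>\<^sup>+u. ennreal (h (u - a)) * g (u - b) \<partial>lborel)"
    using eq by (intro nn_integral_cong_AE) (auto elim!: eventually_mono)
  also have "\<dots> = (\<integral>\<^sup>+v. ennreal (h (v + b - a)) * g v \<partial>lborel)"
    by (subst (2) nn_integral_real_affine[where c=1 and t="-b"]) (auto simp: algebra_simps)
  finally show ?thesis .
qed

lemma sn_mix_density_location_eq:
  assumes Q: "scale_mixing_dist Q" and Q': "scale_mixing_dist Q'"
    and eq: "AE u in lborel. sn_mix_density Q lam (u - a) = sn_mix_density Q' lam' (u - a')"
  shows "a = a'"
proof (rule ccontr)
  assume "a \<noteq> a'"
  define t where "t = pi / (a - a')"
  have cos_shift: "cos (t * (v + a' - a)) = - cos (t * v)" for v
  proof -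
    have "t * (v + a' - a) = t * v - pi"
      using \<open>a \<noteq> a'\<close> by (simp add: t_def field_simps)
    then show ?thesis
      by (simp add: cos_diff)
  qed
  have "ennreal (1 + normal_scale_mix_char Q t)
      = (\<integral>\<^sup>+e. ennreal (1 + cos (t * e)) * sn_mix_density Q lam e \<partial>lborel)"
    using nn_integral_cos_sn_mix_density[OF Q, of 1 t lam] by simp
  also have "\<dots> = (\<integral>\<^sup>+v. ennreal (1 - cos (t * v)) * sn_mix_density Q' lam' v \<partial>lborel)"
    using Q Q' nn_integral_shift_AE_eq[OF _ _ _ eq, of "\<lambda>e. 1 + cos (t * e)"] by (simp add: cos_shift)
  also have "\<dots> = ennreal (1 - normal_scale_mix_char Q' t)"
    using nn_integral_cos_sn_mix_density[OF Q', of "- 1" t lam'] by simp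
  finally have "1 + normal_scale_mix_char Q t = 1 - normal_scale_mix_char Q' t"
    using normal_scale_mix_char_bounds[OF Q, of t] normal_scale_mix_char_bounds[OF Q', of t]
    by (subst (asm) ennreal_inj) auto
  then show False
    using normal_scale_mix_char_bounds[OF Q, of t] normal_scale_mix_char_bounds[OF Q', of t]
    by linarith
qed

lemma sn_mix_density_identifiable:
  assumes Q: "scale_mixing_dist Q" and Q': "scale_mixing_dist Q'"
    and eq: "AE u in lborel. sn_mix_density Q lam (u - a) = sn_mix_density Q' lam' (u - a)"
  shows "lam = lam' \<and> Q = Q'"
proof -
  have same: "(\<integral>\<^sup>+e. ennreal (h e) * sn_mix_density Q lam e \<partial>lborel)
            = (\<integral>\<^sup>+e. ennreal (h e) * sn_mix_density Q' lam' e \<partial>lborel)"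
    if "h \<in> borel_measurable borel" for h
    using Q Q' that nn_integral_shift_AE_eq[OF _ _ _ eq, of h] by simp
  have "(\<integral>\<^sup>+x\<in>{0<..}. ennreal (skew_normal_density lam x) \<partial>lborel)
      = (\<integral>\<^sup>+e\<in>{0<..}. sn_mix_density Q lam e \<partial>lborel)"
    by (rule nn_integral_pos_sn_mix_density[OF Q, symmetric])
  also have "\<dots> = (\<integral>\<^sup>+e\<in>{0<..}. sn_mix_density Q' lam' e \<partial>lborel)"
    using same[of "indicator {0<..}"] by (simp add: ennreal_indicator mult.commute)
  also have "\<dots> = (\<integral>\<^sup>+x\<in>{0<..}. ennreal (skew_normal_density lam' x) \<partial>lborel)"
    by (rule nn_integral_pos_sn_mix_density[OF Q'])
  finally have "lam = lam'"
    by (rule strict_mono_eq[OF strict_mono_skew_normal_prob_pos, THEN iffD1])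
  moreover have "Q = Q'"
  proof (rule scale_mixing_dist_eqI[OF Q Q'])
    fix t
    have "ennreal (1 + normal_scale_mix_char Q t) = ennreal (1 + normal_scale_mix_char Q' t)"
      using same[of "\<lambda>e. 1 + cos (t * e)"] nn_integral_cos_sn_mix_density[OF Q, of 1 t lam]
        nn_integral_cos_sn_mix_density[OF Q', of 1 t lam'] by simp
    then show "normal_scale_mix_char Q t = normal_scale_mix_char Q' t"
      using normal_scale_mix_char_bounds[OF Q, of t] normal_scale_mix_char_bounds[OF Q', of t]
      by (subst (asm) ennreal_inj) auto
  qed
  ultimately show ?thesis ..
qed

lemma affine_eq_on_open_imp_eq:
  fixes \<beta> \<beta>' :: "'a::real_inner"
  assumes "open U" "U \<noteq> {}" and eq: "\<And>x. x \<in> U \<Longrightarrow> b + x \<bullet> \<beta> = b' + x \<bullet> \<beta>'"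
  shows "b = b' \<and> \<beta> = \<beta>'"
proof -
  obtain x0 r where "x0 \<in> U" "0 < r" "ball x0 r \<subseteq> U"
    using assms(1,2) by (meson ex_in_conv openE)
  define \<gamma> where "\<gamma> = \<beta> - \<beta>'"
  have "\<gamma> = 0"
  proof (rule ccontr)
    assume "\<gamma> \<noteq> 0"
    define c where "c = r / (2 * norm \<gamma>)"
    have "norm (c *\<^sub>R \<gamma>) < r"
      using \<open>0 < r\<close> \<open>\<gamma> \<noteq> 0\<close> by (simp add: c_def)
    then have "x0 + c *\<^sub>R \<gamma> \<in> U"
      using \<open>ball x0 r \<subseteq> U\<close> by (auto simp: dist_norm)
    then have "c * (\<gamma> \<bullet> \<beta>) = c * (\<gamma> \<bullet> \<beta>')"
      using eq[of "x0 + c *\<^sub>R \<gamma>"] eq[OF \<open>x0 \<in> U\<close>] unfolding inner_add_left inner_scaleR_left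
      by linarith
    moreover have "\<gamma> \<bullet> \<gamma> = \<gamma> \<bullet> \<beta> - \<gamma> \<bullet> \<beta>'"
      by (simp add: \<gamma>_def inner_diff_right)
    ultimately have "c * (\<gamma> \<bullet> \<gamma>) = 0"
      by (simp add: right_diff_distrib)
    then show False
      using \<open>0 < r\<close> \<open>\<gamma> \<noteq> 0\<close> by (simp add: c_def)
  qed
  then show ?thesis
    using eq[OF \<open>x0 \<in> U\<close>] by (simp add: \<gamma>_def)
qed

theorem theorem1:
  fixes X :: "'p::euclidean_space set"
    and b0 b0' lam lam' :: real
    and \<beta> \<beta>' :: "'p"
    and Q Q' :: "real measure"
  assumes X_open: "\<exists>U. open U \<and> U \<noteq> {} \<and> U \<subseteq> X"
    and Q: "scale_mixing_dist Q"
    and Q': "scale_mixing_dist Q'"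
    and eq: "\<forall>x\<in>X. AE t in lborel. t > 0 \<longrightarrow>
               sn_mix_density Q lam (ln t - b0 - x \<bullet> \<beta>)
             = sn_mix_density Q' lam' (ln t - b0' - x \<bullet> \<beta>')"
  shows "b0 = b0' \<and> \<beta> = \<beta>' \<and> lam = lam' \<and> Q = Q'"
proof -
  have ae: "AE u in lborel. sn_mix_density Q lam (u - (b0 + x \<bullet> \<beta>))
                          = sn_mix_density Q' lam' (u - (b0' + x \<bullet> \<beta>'))" if "x \<in> X" for x
  proof (rule AE_lborel_ln)
    show "AE t in lborel. 0 < t \<longrightarrow> sn_mix_density Q lam (ln t - (b0 + x \<bullet> \<beta>))
                                 = sn_mix_density Q' lam' (ln t - (b0' + x \<bullet> \<beta>'))"
      using eq that by (simp add: diff_diff_eq)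
  qed (use Q Q' in measurable)
  have location: "b0 + x \<bullet> \<beta> = b0' + x \<bullet> \<beta>'" if "x \<in> X" for x
    by (rule sn_mix_density_location_eq[OF Q Q' ae[OF that]])
  obtain U where "open U" "U \<noteq> {}" "U \<subseteq> X"
    using X_open by blast
  then obtain x where "x \<in> X"
    by blast
  have "b0 = b0' \<and> \<beta> = \<beta>'"
    using \<open>open U\<close> \<open>U \<noteq> {}\<close> \<open>U \<subseteq> X\<close> location by (intro affine_eq_on_open_imp_eq[of U]) auto
  moreover have "lam = lam' \<and> Q = Q'"
    using ae[OF \<open>x \<in> X\<close>] unfolding location[OF \<open>x \<in> X\<close>]
    by (rule sn_mix_density_identifiable[OF Q Q'])
  ultimately show ?thesis
    by blast
qed

end
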